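(* For every connected graph $G$, $\tau(G)\leq \left\lceil \tfrac{1}{2}(\operatorname{dll}(G)+1)\,\operatorname{p}(G)\right\rceil$.
   Context: For an integer $k\geq 0$, the $k$-daddy-longlegs $W^{(k)}$ is the tree with vertex set $\{r,u_1,\dots,u_k,v_1,\dots,v_k\}$ and edge set $\{ru_i,u_iv_i:i\in\{1,\dots,k\}\}$ (so $W^{(0)}$ is a single vertex). The daddy-longlegs number $\operatorname{dll}(G)$ is the maximum $k\geq 0$ such that $W^{(k)}$ is a minor of $G$. The path number $\operatorname{p}(G)$ is the maximum $n$ such that $G$ contains a path on $n$ vertices. The vertex cover number $\tau(G)$ is the minimum size of a set $A\subseteq V(G)$ such that $V(G)\setminus A$ is an independent set. *)

theory Defs
  imports Complex_Main
begin

definition graph :: "'a set \<Rightarrow> ('a \<Rightarrow> 'a \<Rightarrow> bool) \<Rightarrow> bool" where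
  "graph V E \<longleftrightarrow> finite V \<and> (\<forall>u v. E u v \<longrightarrow> u \<in> V \<and> v \<in> V) \<and>
     (\<forall>u v. E u v \<longrightarrow> E v u) \<and> (\<forall>u. \<not> E u u)"

definition walk_in :: "('a \<Rightarrow> 'a \<Rightarrow> bool) \<Rightarrow> 'a set \<Rightarrow> 'a list \<Rightarrow> bool" where
  "walk_in E S xs \<longleftrightarrow> xs \<noteq> [] \<and> set xs \<subseteq> S \<and>
     (\<forall>i. Suc i < length xs \<longrightarrow> E (xs ! i) (xs ! Suc i))"

definition is_path :: "'a set \<Rightarrow> ('a \<Rightarrow> 'a \<Rightarrow> bool) \<Rightarrow> 'a list \<Rightarrow> bool" where
  "is_path V E xs \<longleftrightarrow> walk_in E V xs \<and> distinct xs"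

definition connected_set :: "('a \<Rightarrow> 'a \<Rightarrow> bool) \<Rightarrow> 'a set \<Rightarrow> bool" where
  "connected_set E S \<longleftrightarrow> S \<noteq> {} \<and>
     (\<forall>u\<in>S. \<forall>v\<in>S. \<exists>xs. walk_in E S xs \<and> hd xs = u \<and> last xs = v)"

definition connected_graph :: "'a set \<Rightarrow> ('a \<Rightarrow> 'a \<Rightarrow> bool) \<Rightarrow> bool" where
  "connected_graph V E \<longleftrightarrow> graph V E \<and> connected_set E V"

definition is_minor :: "'b set \<Rightarrow> ('b \<Rightarrow> 'b \<Rightarrow> bool) \<Rightarrow> 'a set \<Rightarrow> ('a \<Rightarrow> 'a \<Rightarrow> bool) \<Rightarrow> bool" where
  "is_minor VH EH V E \<longleftrightarrow> (\<exists>\<phi> :: 'b \<Rightarrow> 'a set.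
     (\<forall>x\<in>VH. \<phi> x \<subseteq> V \<and> connected_set E (\<phi> x)) \<and>
     (\<forall>x\<in>VH. \<forall>y\<in>VH. x \<noteq> y \<longrightarrow> \<phi> x \<inter> \<phi> y = {}) \<and>
     (\<forall>x\<in>VH. \<forall>y\<in>VH. EH x y \<longrightarrow> (\<exists>a\<in>\<phi> x. \<exists>b\<in>\<phi> y. E a b)))"

datatype dll_vertex = R | U nat | L nat

definition dll_V :: "nat \<Rightarrow> dll_vertex set" where
  "dll_V k = {R} \<union> U ` {1..k} \<union> L ` {1..k}"

definition dll_E :: "nat \<Rightarrow> dll_vertex \<Rightarrow> dll_vertex \<Rightarrow> bool" where
  "dll_E k x y \<longleftrightarrow> (\<exists>i\<in>{1..k}.
     (x = R \<and> y = U i) \<or> (x = U i \<and> y = R) \<or> (x = U i \<and> y = L i) \<or> (x = L i \<and> y = U i))"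

definition dll :: "'a set \<Rightarrow> ('a \<Rightarrow> 'a \<Rightarrow> bool) \<Rightarrow> nat" where
  "dll V E = (GREATEST k. is_minor (dll_V k) (dll_E k) V E)"

definition path_number :: "'a set \<Rightarrow> ('a \<Rightarrow> 'a \<Rightarrow> bool) \<Rightarrow> nat" where
  "path_number V E = Max {length xs | xs. is_path V E xs}"

definition vertex_cover :: "'a set \<Rightarrow> ('a \<Rightarrow> 'a \<Rightarrow> bool) \<Rightarrow> 'a set \<Rightarrow> bool" where
  "vertex_cover V E A \<longleftrightarrow> A \<subseteq> V \<and> (\<forall>u\<in>V - A. \<forall>v\<in>V - A. \<not> E u v)"

definition tau :: "'a set \<Rightarrow> ('a \<Rightarrow> 'a \<Rightarrow> bool) \<Rightarrow> nat" where
  "tau V E = Min {card A | A. vertex_cover V E A}"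

end

theory Submission
  imports Defs
begin

text \<open>Root the connected graph at r and decompose it along the components of G - r. By induction
  on the rooted subgraph S one finds a vertex cover A of G[S] containing r, a path with h edges
  starting at r, and a daddy-longlegs minor with m legs whose root branch set contains r, such
  that 2|A| + 3m + p \<le> 2h + mp + 3, where p is the path number of G. Putting a new root above a
  component adds one vertex to A and one edge to the path; two structures sharing their root are
  merged by uniting covers and legs and keeping the longer path. As h < p, the invariant yields
  2|A| \<le> (m + 1)p with m \<le> dll(G).\<close>

lemma walk_in_iff_successively:
  "walk_in E S xs \<longleftrightarrow> xs \<noteq> [] \<and> set xs \<subseteq> S \<and> successively E xs"
  by (auto simp: walk_in_def successively_conv_nth)

lemma is_path_mono: "is_path S E xs \<Longrightarrow> S \<subseteq> T \<Longrightarrow> is_path T E xs"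
  by (auto simp: is_path_def walk_in_def)

definition adj_in :: "('a \<Rightarrow> 'a \<Rightarrow> bool) \<Rightarrow> 'a set \<Rightarrow> 'a \<Rightarrow> 'a \<Rightarrow> bool" where
  "adj_in E S a b \<longleftrightarrow> a \<in> S \<and> b \<in> S \<and> E a b"

lemma rtranclp_adj_in_if_walk_in:
  "walk_in E S xs \<Longrightarrow> (adj_in E S)\<^sup>*\<^sup>* (hd xs) (last xs)"
proof (induction xs rule: induct_list012)
  case (3 x y zs)
  then have "adj_in E S x y" "walk_in E S (y # zs)"
    by (auto simp: walk_in_iff_successively adj_in_def)
  with "3.IH"(2) show ?case by (simp add: converse_rtranclp_into_rtranclp)
qed (auto simp: walk_in_def)

lemma walk_in_if_rtranclp:
  assumes "(adj_in E S)\<^sup>*\<^sup>* u v" "u \<in> S"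
  shows "\<exists>xs. walk_in E S xs \<and> hd xs = u \<and> last xs = v"
  using assms
proof (induction rule: rtranclp_induct)
  case base
  then show ?case by (intro exI[of _ "[u]"]) (simp add: walk_in_def)
next
  case (step y z)
  then obtain xs where "walk_in E S xs" "hd xs = u" "last xs = y" by blast
  with step.hyps(2) show ?case
    by (intro exI[of _ "xs @ [z]"])
       (auto simp: walk_in_iff_successively successively_append_iff adj_in_def)
qed

lemma connected_set_iff_rtranclp:
  "connected_set E S \<longleftrightarrow> S \<noteq> {} \<and> (\<forall>u\<in>S. \<forall>v\<in>S. (adj_in E S)\<^sup>*\<^sup>* u v)"
proof -
  have "(\<exists>xs. walk_in E S xs \<and> hd xs = u \<and> last xs = v) \<longleftrightarrow> (adj_in E S)\<^sup>*\<^sup>* u v"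
    if "u \<in> S" for u v
  proof
    assume "\<exists>xs. walk_in E S xs \<and> hd xs = u \<and> last xs = v"
    then obtain xs where "walk_in E S xs" "hd xs = u" "last xs = v" by blast
    then show "(adj_in E S)\<^sup>*\<^sup>* u v" using rtranclp_adj_in_if_walk_in by blast
  next
    assume "(adj_in E S)\<^sup>*\<^sup>* u v"
    from walk_in_if_rtranclp[OF this that]
    show "\<exists>xs. walk_in E S xs \<and> hd xs = u \<and> last xs = v" .
  qed
  then show ?thesis unfolding connected_set_def by blast
qed

lemma rtranclp_adj_in_sym:
  "symp E \<Longrightarrow> (adj_in E S)\<^sup>*\<^sup>* a b \<Longrightarrow> (adj_in E S)\<^sup>*\<^sup>* b a"
  by (rule sympD[OF symp_rtranclp]) (auto simp: adj_in_def symp_def)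

lemma rtranclp_adj_in_mono:
  assumes "(adj_in E S)\<^sup>*\<^sup>* a b" "S \<subseteq> T"
  shows "(adj_in E T)\<^sup>*\<^sup>* a b"
proof -
  have "adj_in E S a b \<longrightarrow> adj_in E T a b" for a b
    using assms(2) by (auto simp: adj_in_def)
  then show ?thesis using assms(1) mono_rtranclp by metis
qed

lemma connected_setI:
  assumes "symp E" "r \<in> S" "\<And>v. v \<in> S \<Longrightarrow> (adj_in E S)\<^sup>*\<^sup>* r v"
  shows "connected_set E S"
  unfolding connected_set_iff_rtranclp
proof (intro conjI ballI)
  fix u v assume "u \<in> S" "v \<in> S"
  then show "(adj_in E S)\<^sup>*\<^sup>* u v"
    using assms rtranclp_adj_in_sym[of E S r u] by (meson rtranclp_trans)
qed (use assms(2) in blast)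

lemma connected_set_singleton: "connected_set E {x}"
  by (simp add: connected_set_iff_rtranclp)

lemma connected_set_edge: "symp E \<Longrightarrow> E a b \<Longrightarrow> connected_set E {a, b}"
  by (rule connected_setI[of E a]) (auto simp: adj_in_def)

lemma connected_set_Un:
  assumes X: "connected_set E X" and Y: "connected_set E Y" and "r \<in> X" "r \<in> Y"
  shows "connected_set E (X \<union> Y)"
proof -
  have reach: "(adj_in E (X \<union> Y))\<^sup>*\<^sup>* u v" if "u \<in> Z" "v \<in> Z" "connected_set E Z" "Z \<subseteq> X \<union> Y"
    for u v Z
    using that unfolding connected_set_iff_rtranclp by (blast intro: rtranclp_adj_in_mono)
  show ?thesis
    unfolding connected_set_iff_rtranclp
  proof (intro conjI ballI)
    fix u v assume "u \<in> X \<union> Y" "v \<in> X \<union> Y"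
    then have "(adj_in E (X \<union> Y))\<^sup>*\<^sup>* u r" "(adj_in E (X \<union> Y))\<^sup>*\<^sup>* r v"
      using reach[OF _ _ X] reach[OF _ _ Y] assms(3,4) by blast+
    then show "(adj_in E (X \<union> Y))\<^sup>*\<^sup>* u v" by (rule rtranclp_trans)
  qed (use assms(3) in blast)
qed

lemma connected_set_neighbour:
  assumes "connected_set E S" "r \<in> S" "y \<in> S" "y \<noteq> r"
  obtains x where "x \<in> S" "E r x"
proof -
  have "(adj_in E S)\<^sup>*\<^sup>* r y"
    using assms unfolding connected_set_iff_rtranclp by blast
  then show ?thesis
    using assms(4) that by (cases rule: converse_rtranclpE) (auto simp: adj_in_def)
qed

definition component :: "('a \<Rightarrow> 'a \<Rightarrow> bool) \<Rightarrow> 'a set \<Rightarrow> 'a \<Rightarrow> 'a set" where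
  "component E T x = {z. (adj_in E T)\<^sup>*\<^sup>* x z}"

lemma self_in_component: "x \<in> component E T x"
  by (simp add: component_def)

lemma component_subset: "x \<in> T \<Longrightarrow> component E T x \<subseteq> T"
proof
  fix z assume "z \<in> component E T x" "x \<in> T"
  then have "(adj_in E T)\<^sup>*\<^sup>* x z" "x \<in> T" by (simp_all add: component_def)
  then show "z \<in> T"
    by (induction rule: rtranclp_induct) (auto simp: adj_in_def)
qed

lemma component_closed:
  assumes "x \<in> T" "z \<in> component E T x" "w \<in> T" "E z w"
  shows "w \<in> component E T x"
proof -
  have "z \<in> T" using component_subset[OF assms(1)] assms(2) by (rule subsetD)
  with assms(3,4) have "adj_in E T z w" by (simp add: adj_in_def)
  moreover have "(adj_in E T)\<^sup>*\<^sup>* x z" using assms(2) by (simp add: component_def)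
  ultimately show ?thesis
    unfolding component_def by (simp add: rtranclp.rtrancl_into_rtrancl)
qed

lemma connected_component:
  assumes "symp E"
  shows "connected_set E (component E T x)"
proof (rule connected_setI[OF assms self_in_component])
  fix v assume "v \<in> component E T x"
  then have "(adj_in E T)\<^sup>*\<^sup>* x v" by (simp add: component_def)
  then show "(adj_in E (component E T x))\<^sup>*\<^sup>* x v"
  proof (induction rule: rtranclp_induct)
    case (step y z)
    then have "y \<in> component E T x" "z \<in> component E T x"
      by (simp_all add: component_def rtranclp.rtrancl_into_rtrancl)
    with step.hyps(2) have "adj_in E (component E T x) y z" by (simp add: adj_in_def)
    with step.IH show ?case by (rule rtranclp.rtrancl_into_rtrancl)
  qed simp
qed

lemma connected_set_Diff:
  assumes conn: "connected_set E S" and "symp E" "r \<in> S" and "C \<subseteq> S - {r}"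
    and closed: "\<And>z w. z \<in> C \<Longrightarrow> w \<in> S - {r} \<Longrightarrow> E z w \<Longrightarrow> w \<in> C"
  shows "connected_set E (S - C)"
proof (rule connected_setI[OF \<open>symp E\<close>])
  show "r \<in> S - C" using assms(3,4) by blast
  fix v assume v: "v \<in> S - C"
  have "(adj_in E S)\<^sup>*\<^sup>* r v"
    using conn \<open>r \<in> S\<close> v unfolding connected_set_iff_rtranclp by blast
  then show "(adj_in E (S - C))\<^sup>*\<^sup>* r v"
    using v
  proof (induction rule: rtranclp_induct)
    case (step a b)
    then have ab: "a \<in> S" "b \<in> S" "E a b" by (auto simp: adj_in_def)
    show ?case
    proof (cases "a \<in> C")
      case True
      then have "b = r" using closed ab step.prems by blast
      then show ?thesis by simp
    next
      case False
      then have "adj_in E (S - C) a b" using ab step.prems by (simp add: adj_in_def)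
      moreover have "(adj_in E (S - C))\<^sup>*\<^sup>* r a" using False ab(1) step.IH by blast
      ultimately show ?thesis by (simp add: rtranclp.rtrancl_into_rtrancl)
    qed
  qed simp
qed

lemma closed_set_edge_cases:
  assumes "symp E" "C \<subseteq> S - {r}"
    and closed: "\<And>z w. z \<in> C \<Longrightarrow> w \<in> S - {r} \<Longrightarrow> E z w \<Longrightarrow> w \<in> C"
    and "u \<in> S" "v \<in> S" "E u v"
  shows "u \<in> insert r C \<and> v \<in> insert r C \<or> u \<in> S - C \<and> v \<in> S - C"
proof -
  have "E v u" using \<open>symp E\<close> \<open>E u v\<close> by (rule sympD)
  then show ?thesis using closed assms(4-6) by blast
qed

lemma punctured_component_split:
  assumes "connected_set E S" "symp E" "r \<in> S" "x \<in> S - {r}"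
  defines "C \<equiv> component E (S - {r}) x"
  shows "x \<in> C" "C \<subseteq> S - {r}" "connected_set E C" "connected_set E (S - C)"
    and "\<And>u v. u \<in> S \<Longrightarrow> v \<in> S \<Longrightarrow> E u v \<Longrightarrow>
      u \<in> insert r C \<and> v \<in> insert r C \<or> u \<in> S - C \<and> v \<in> S - C"
proof -
  have C: "x \<in> C" "C \<subseteq> S - {r}" "connected_set E C"
    unfolding C_def using assms(4) connected_component[OF assms(2)]
    by (simp_all add: self_in_component component_subset)
  have closed: "\<And>z w. z \<in> C \<Longrightarrow> w \<in> S - {r} \<Longrightarrow> E z w \<Longrightarrow> w \<in> C"
    unfolding C_def using assms(4) by (rule component_closed)
  show "x \<in> C" "C \<subseteq> S - {r}" "connected_set E C" by (fact C)+
  show "connected_set E (S - C)"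
    using assms(1-3) C(2) closed by (rule connected_set_Diff)
  show "u \<in> insert r C \<and> v \<in> insert r C \<or> u \<in> S - C \<and> v \<in> S - C"
    if "u \<in> S" "v \<in> S" "E u v" for u v
    using assms(2) C(2) closed that by (rule closed_set_edge_cases)
qed

text \<open>A daddy-longlegs W^(m) with root branch set B containing r, and single-vertex
  branch sets us ! j and ws ! j for U (j + 1) and L (j + 1).\<close>

definition rooted_dll :: "('a \<Rightarrow> 'a \<Rightarrow> bool) \<Rightarrow> 'a set \<Rightarrow> 'a \<Rightarrow> nat \<Rightarrow> bool" where
  "rooted_dll E S r m \<longleftrightarrow> (\<exists>B us ws. r \<in> B \<and> B \<subseteq> S \<and> connected_set E B \<and>
     length us = m \<and> length ws = m \<and> distinct (us @ ws) \<and> set (us @ ws) \<subseteq> S - B \<and>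
     (\<forall>i<m. E (us ! i) (ws ! i) \<and> (\<exists>b\<in>B. E b (us ! i))))"

lemma rooted_dll_mono: "rooted_dll E S r m \<Longrightarrow> S \<subseteq> T \<Longrightarrow> rooted_dll E T r m"
  unfolding rooted_dll_def by blast

lemma rooted_dll_single_leg:
  assumes "E r u" "E u w" "distinct [r, u, w]" "{r, u, w} \<subseteq> S"
  shows "rooted_dll E S r 1"
  unfolding rooted_dll_def
  using assms connected_set_singleton[of E r]
  by (intro exI[of _ "{r}"] exI[of _ "[u]"] exI[of _ "[w]"]) auto

lemma rooted_dll_insert_root:
  assumes "rooted_dll E S c m" "r \<notin> S" "E r c" "symp E"
  shows "rooted_dll E (insert r S) r m"
proof -
  obtain B us ws where B: "c \<in> B" "B \<subseteq> S" "connected_set E B"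
    and legs: "length us = m" "length ws = m" "distinct (us @ ws)" "set (us @ ws) \<subseteq> S - B"
      "\<forall>i<m. E (us ! i) (ws ! i) \<and> (\<exists>b\<in>B. E b (us ! i))"
    using assms(1) unfolding rooted_dll_def by blast
  have "connected_set E ({r, c} \<union> B)"
    using connected_set_Un[OF connected_set_edge[OF assms(4,3)] B(3)] B(1) by blast
  then have "connected_set E (insert r B)"
    using B(1) by (simp add: insert_absorb)
  with B legs assms(2) show ?thesis
    unfolding rooted_dll_def by (intro exI[of _ "insert r B"] exI[of _ us] exI[of _ ws]) auto
qed

lemma rooted_dll_Un:
  assumes "rooted_dll E S1 r m1" "rooted_dll E S2 r m2" "S1 \<inter> S2 = {r}"
  shows "rooted_dll E (S1 \<union> S2) r (m1 + m2)"
proof -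
  obtain B1 us1 ws1 where B1: "r \<in> B1" "B1 \<subseteq> S1" "connected_set E B1"
    and legs1: "length us1 = m1" "length ws1 = m1" "distinct (us1 @ ws1)" "set (us1 @ ws1) \<subseteq> S1 - B1"
      "\<forall>i<m1. E (us1 ! i) (ws1 ! i) \<and> (\<exists>b\<in>B1. E b (us1 ! i))"
    using assms(1) unfolding rooted_dll_def by blast
  obtain B2 us2 ws2 where B2: "r \<in> B2" "B2 \<subseteq> S2" "connected_set E B2"
    and legs2: "length us2 = m2" "length ws2 = m2" "distinct (us2 @ ws2)" "set (us2 @ ws2) \<subseteq> S2 - B2"
      "\<forall>i<m2. E (us2 ! i) (ws2 ! i) \<and> (\<exists>b\<in>B2. E b (us2 ! i))"
    using assms(2) unfolding rooted_dll_def by blast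
  have disjoint: "set (us1 @ ws1) \<inter> set (us2 @ ws2) = {}"
    using legs1(4) legs2(4) B1(1) B2(1) assms(3) by auto
  have "E ((us1 @ us2) ! i) ((ws1 @ ws2) ! i) \<and> (\<exists>b\<in>B1 \<union> B2. E b ((us1 @ us2) ! i))"
    if "i < m1 + m2" for i
  proof (cases "i < m1")
    case True
    then show ?thesis using legs1 by (auto simp: nth_append)
  next
    case False
    then have "i - m1 < m2" using that by simp
    then show ?thesis using False legs1(1,2) legs2(5) by (auto simp: nth_append)
  qed
  moreover have "connected_set E (B1 \<union> B2)"
    using B1 B2 by (blast intro: connected_set_Un)
  moreover have "distinct ((us1 @ us2) @ ws1 @ ws2)"
    using legs1(3) legs2(3) disjoint by auto
  moreover have "set ((us1 @ us2) @ ws1 @ ws2) \<subseteq> S1 \<union> S2 - (B1 \<union> B2)"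
    using legs1(4) legs2(4) B1(1,2) B2(1,2) assms(3) by auto
  ultimately show ?thesis
    unfolding rooted_dll_def using B1 B2 legs1 legs2
    by (intro exI[of _ "B1 \<union> B2"] exI[of _ "us1 @ us2"] exI[of _ "ws1 @ ws2"]) auto
qed

lemma mem_dll_V_iff: "x \<in> dll_V m \<longleftrightarrow> x = R \<or> (\<exists>j<m. x = U (Suc j) \<or> x = L (Suc j))"
  unfolding dll_V_def by (cases x) (auto simp: Suc_le_eq gr0_conv_Suc)

lemma dll_E_iff:
  "dll_E m x y \<longleftrightarrow> (\<exists>j<m. x = R \<and> y = U (Suc j) \<or> x = U (Suc j) \<and> y = R \<or>
     x = U (Suc j) \<and> y = L (Suc j) \<or> x = L (Suc j) \<and> y = U (Suc j))"
  unfolding dll_E_def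
proof
  assume "\<exists>i\<in>{1..m}. x = R \<and> y = U i \<or> x = U i \<and> y = R \<or> x = U i \<and> y = L i \<or> x = L i \<and> y = U i"
  then obtain i where "i \<in> {1..m}"
    "x = R \<and> y = U i \<or> x = U i \<and> y = R \<or> x = U i \<and> y = L i \<or> x = L i \<and> y = U i" by blast
  moreover from this(1) obtain j where "i = Suc j" "j < m"
    by (metis atLeastAtMost_iff Suc_le_eq not0_implies_Suc not_one_le_zero Suc_le_mono)
  ultimately show "\<exists>j<m. x = R \<and> y = U (Suc j) \<or> x = U (Suc j) \<and> y = R \<or>
     x = U (Suc j) \<and> y = L (Suc j) \<or> x = L (Suc j) \<and> y = U (Suc j)" by blast
qed force

lemma rooted_dll_is_minor:
  assumes "rooted_dll E V r m" "symp E"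
  shows "is_minor (dll_V m) (dll_E m) V E"
proof -
  obtain B us ws where B: "B \<subseteq> V" "connected_set E B"
    and legs: "length us = m" "length ws = m" "distinct (us @ ws)" "set (us @ ws) \<subseteq> V - B"
      "\<forall>j<m. E (us ! j) (ws ! j) \<and> (\<exists>b\<in>B. E b (us ! j))"
    using assms(1) unfolding rooted_dll_def by blast
  define \<phi> where "\<phi> x = (case x of R \<Rightarrow> B | U i \<Rightarrow> {us ! (i - 1)} | L i \<Rightarrow> {ws ! (i - 1)})" for x
  have leg_vertex: "us ! j \<in> V - B" "ws ! j \<in> V - B" if "j < m" for j
  proof -
    have "us ! j \<in> set (us @ ws)" "ws ! j \<in> set (us @ ws)"
      using that legs(1,2) by simp_all
    then show "us ! j \<in> V - B" "ws ! j \<in> V - B" using legs(4) by blast+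
  qed
  have leg_distinct: "us ! j \<noteq> ws ! k" "ws ! k \<noteq> us ! j" "us ! j = us ! k \<longleftrightarrow> j = k" "ws ! j = ws ! k \<longleftrightarrow> j = k"
    if "j < m" "k < m" for j k
    using that legs(1-3) nth_mem[of j us] nth_mem[of k ws]
    by (auto simp: nth_eq_iff_index_eq disjoint_iff simp del: nth_mem)
  have "\<phi> x \<subseteq> V \<and> connected_set E (\<phi> x)" if "x \<in> dll_V m" for x
    using that B leg_vertex unfolding mem_dll_V_iff \<phi>_def
    by (auto simp: connected_set_singleton)
  moreover have "\<phi> x \<inter> \<phi> y = {}" if "x \<in> dll_V m" "y \<in> dll_V m" "x \<noteq> y" for x y
    using that leg_vertex leg_distinct unfolding mem_dll_V_iff \<phi>_def by auto
  moreover have "\<exists>a\<in>\<phi> x. \<exists>b\<in>\<phi> y. E a b" if edge: "dll_E m x y" for x y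
  proof -
    obtain j where "j < m"
      and xy: "x = R \<and> y = U (Suc j) \<or> x = U (Suc j) \<and> y = R \<or>
        x = U (Suc j) \<and> y = L (Suc j) \<or> x = L (Suc j) \<and> y = U (Suc j)"
      using edge unfolding dll_E_iff by blast
    then obtain b where "b \<in> B" "E b (us ! j)" "E (us ! j) (ws ! j)"
      using legs(5) by blast
    moreover have "E (us ! j) b" "E (ws ! j) (us ! j)"
      using calculation(2,3) assms(2) by (blast dest: sympD)+
    ultimately show ?thesis
      using xy unfolding \<phi>_def by auto
  qed
  ultimately show ?thesis
    unfolding is_minor_def by (intro exI[of _ \<phi>]) blast
qed

text \<open>The invariant of the induction; A = {r} with m = 1 covers a star at r, which has no leg
  yet. Merging two such structures at r saves the vertex r and a copy of p but costs the
  shorter root path; this is affordable because the two root paths join to a path of G.\<close>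

definition rooted_cover :: "('a \<Rightarrow> 'a \<Rightarrow> bool) \<Rightarrow> nat \<Rightarrow> 'a set \<Rightarrow> 'a \<Rightarrow> 'a set \<Rightarrow> nat \<Rightarrow> nat \<Rightarrow> bool"
  where "rooted_cover E p S r A h m \<longleftrightarrow> vertex_cover S E A \<and> r \<in> A \<and>
    (\<exists>xs. is_path S E xs \<and> hd xs = r \<and> length xs = Suc h) \<and> 1 \<le> m \<and>
    2 * card A + 3 * m + p \<le> 2 * h + m * p + 3 \<and>
    (A = {r} \<and> m = 1 \<or> rooted_dll E S r m)"

lemma vertex_cover_Un:
  assumes "vertex_cover S1 E A1" "vertex_cover S2 E A2"
    and "\<And>u v. u \<in> S1 \<union> S2 \<Longrightarrow> v \<in> S1 \<union> S2 \<Longrightarrow> E u v \<Longrightarrow> u \<in> S1 \<and> v \<in> S1 \<or> u \<in> S2 \<and> v \<in> S2"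
  shows "vertex_cover (S1 \<union> S2) E (A1 \<union> A2)"
  using assms unfolding vertex_cover_def by blast

lemma rooted_cover_edge:
  assumes "E r x" "r \<noteq> x" "irreflp E"
  shows "rooted_cover E p {r, x} r {r} 1 1"
proof -
  have "is_path {r, x} E [r, x]"
    using assms(1,2) by (simp add: is_path_def walk_in_def)
  moreover have "vertex_cover {r, x} E {r}"
    using assms(3) by (auto simp: vertex_cover_def irreflp_def)
  ultimately show ?thesis
    unfolding rooted_cover_def by force
qed

lemma rooted_cover_insert_root:
  assumes cov: "rooted_cover E p C c A h m" and "finite C" "r \<notin> C" "E r c" "symp E"
  shows "rooted_cover E p (insert r C) r (insert r A) (Suc h) m"
proof -
  from cov have A: "vertex_cover C E A" "c \<in> A" and "1 \<le> m"
    and bound: "2 * card A + 3 * m + p \<le> 2 * h + m * p + 3"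
    and dll: "A = {c} \<and> m = 1 \<or> rooted_dll E C c m"
    unfolding rooted_cover_def by blast+
  from cov obtain xs where xs: "is_path C E xs" "hd xs = c" "length xs = Suc h"
    unfolding rooted_cover_def by blast
  have "A \<subseteq> C" using A(1) by (simp add: vertex_cover_def)
  then have "finite A" "r \<notin> A"
    using \<open>finite C\<close> \<open>r \<notin> C\<close> by (auto intro: finite_subset)
  then have card_A: "card (insert r A) = Suc (card A)" by simp
  have "vertex_cover (insert r C) E (insert r A)"
    using A(1) \<open>r \<notin> C\<close> by (auto simp: vertex_cover_def)
  moreover have "is_path (insert r C) E (r # xs)"
    using xs \<open>E r c\<close> \<open>r \<notin> C\<close>
    by (cases xs) (auto simp: is_path_def walk_in_iff_successively)
  moreover have "rooted_dll E (insert r C) r m"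
    using dll
  proof
    assume trivial: "A = {c} \<and> m = 1"
    with bound have "1 \<le> h" by simp
    with xs obtain w ys where "xs = c # w # ys"
      by (cases xs; cases "tl xs") auto
    with xs have "E c w" "distinct [c, w]" "{c, w} \<subseteq> C"
      by (auto simp: is_path_def walk_in_iff_successively)
    moreover have "distinct [r, c, w]" "{r, c, w} \<subseteq> insert r C"
      using calculation(2,3) \<open>r \<notin> C\<close> by auto
    ultimately have "rooted_dll E (insert r C) r 1"
      using \<open>E r c\<close> by (intro rooted_dll_single_leg)
    with trivial show ?thesis by simp
  next
    assume "rooted_dll E C c m"
    then show ?thesis using \<open>r \<notin> C\<close> \<open>E r c\<close> \<open>symp E\<close> by (rule rooted_dll_insert_root)
  qed
  ultimately show ?thesis
    unfolding rooted_cover_def using xs \<open>1 \<le> m\<close> bound card_A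
    by (intro conjI disjI2 exI[of _ "r # xs"]) simp_all
qed

lemma rooted_cover_attach:
  assumes "C = {x} \<or> (\<exists>A h m. rooted_cover E p C x A h m)"
    and "finite C" "r \<notin> C" "x \<in> C" "E r x" "symp E" "irreflp E"
  shows "\<exists>A h m. rooted_cover E p (insert r C) r A h m"
  using assms(1)
proof
  assume "C = {x}"
  moreover have "r \<noteq> x" using assms(3,4) by blast
  ultimately have "rooted_cover E p (insert r C) r {r} 1 1"
    using rooted_cover_edge[OF assms(5) _ assms(7)] by simp
  then show ?thesis by blast
next
  assume "\<exists>A h m. rooted_cover E p C x A h m"
  then obtain A h m where "rooted_cover E p C x A h m" by blast
  then have "rooted_cover E p (insert r C) r (insert r A) (Suc h) m"
    using assms(2,3,5,6) by (rule rooted_cover_insert_root)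
  then show ?thesis by blast
qed

lemma rooted_cover_extend:
  assumes "rooted_cover E p S1 r A h m" "S1 \<subseteq> S" "vertex_cover S E A"
  shows "rooted_cover E p S r A h m"
  using assms is_path_mono rooted_dll_mono unfolding rooted_cover_def by metis

lemma is_path_join:
  assumes "is_path S1 E xs1" "is_path S2 E xs2" "hd xs1 = r" "hd xs2 = r"
    and "S1 \<inter> S2 = {r}" "symp E"
  shows "is_path (S1 \<union> S2) E (rev (tl xs2) @ xs1)"
proof -
  obtain ys1 ys2 where xs: "xs1 = r # ys1" "xs2 = r # ys2"
    using assms(1-4) by (cases xs1; cases xs2) (auto simp: is_path_def walk_in_def)
  have walk1: "successively E (r # ys1)" and walk2: "successively E (r # ys2)"
    using assms(1,2) unfolding xs is_path_def walk_in_iff_successively by simp_all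
  have "successively (\<lambda>x y. E y x) ys2"
    using walk2 by (auto simp: successively_Cons intro: successively_mono sympD[OF assms(6)])
  moreover have "E (hd ys2) r" if "ys2 \<noteq> []"
    using that walk2 by (auto simp: successively_Cons intro: sympD[OF assms(6)])
  ultimately have "successively E (rev ys2 @ r # ys1)"
    using walk1 by (auto simp: successively_append_iff last_rev)
  moreover have "set ys1 \<inter> set ys2 = {}"
    using assms(1,2,5) unfolding xs is_path_def walk_in_def by auto
  ultimately show ?thesis
    using assms(1,2) unfolding xs is_path_def walk_in_iff_successively by auto
qed

lemma rooted_cover_Un_dll:
  assumes cov1: "rooted_cover E p S1 r A1 h1 m1" and cov2: "rooted_cover E p S2 r A2 h2 m2"
    and dll: "rooted_dll E S1 r m1" "rooted_dll E S2 r m2" and "h2 \<le> h1"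
    and "finite S1" "finite S2" "S1 \<inter> S2 = {r}" "symp E"
    and split: "\<And>u v. u \<in> S1 \<union> S2 \<Longrightarrow> v \<in> S1 \<union> S2 \<Longrightarrow> E u v \<Longrightarrow>
      u \<in> S1 \<and> v \<in> S1 \<or> u \<in> S2 \<and> v \<in> S2"
    and paths: "\<And>xs. is_path (S1 \<union> S2) E xs \<Longrightarrow> length xs \<le> p"
  shows "rooted_cover E p (S1 \<union> S2) r (A1 \<union> A2) h1 (m1 + m2)"
proof -
  from cov1 have A1: "vertex_cover S1 E A1" "r \<in> A1" and "1 \<le> m1"
    and bound1: "2 * card A1 + 3 * m1 + p \<le> 2 * h1 + m1 * p + 3"
    unfolding rooted_cover_def by blast+
  from cov1 obtain xs1 where xs1: "is_path S1 E xs1" "hd xs1 = r" "length xs1 = Suc h1"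
    unfolding rooted_cover_def by blast
  from cov2 have A2: "vertex_cover S2 E A2" "r \<in> A2"
    and bound2: "2 * card A2 + 3 * m2 + p \<le> 2 * h2 + m2 * p + 3"
    unfolding rooted_cover_def by blast+
  from cov2 obtain xs2 where xs2: "is_path S2 E xs2" "hd xs2 = r" "length xs2 = Suc h2"
    unfolding rooted_cover_def by blast
  have "A1 \<subseteq> S1" "A2 \<subseteq> S2" using A1(1) A2(1) by (simp_all add: vertex_cover_def)
  then have "finite A1" "finite A2" "A1 \<inter> A2 = {r}"
    using \<open>finite S1\<close> \<open>finite S2\<close> \<open>S1 \<inter> S2 = {r}\<close> A1(2) A2(2) by (auto intro: finite_subset)
  then have card: "card (A1 \<union> A2) + 1 = card A1 + card A2"
    using card_Un_Int[of A1 A2] by simp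
  have "is_path (S1 \<union> S2) E (rev (tl xs2) @ xs1)"
    using is_path_join[OF xs1(1) xs2(1) xs1(2) xs2(2)] \<open>S1 \<inter> S2 = {r}\<close> \<open>symp E\<close> by blast
  then have "h2 + Suc h1 \<le> p"
    using paths xs1(3) xs2(3) by fastforce
  with bound1 bound2 card \<open>h2 \<le> h1\<close>
  have "2 * card (A1 \<union> A2) + 3 * (m1 + m2) + p \<le> 2 * h1 + (m1 + m2) * p + 3"
    by (simp add: algebra_simps)
  moreover have "vertex_cover (S1 \<union> S2) E (A1 \<union> A2)"
    using A1(1) A2(1) split by (rule vertex_cover_Un)
  moreover have "is_path (S1 \<union> S2) E xs1"
    using xs1(1) by (rule is_path_mono) simp
  moreover have "rooted_dll E (S1 \<union> S2) r (m1 + m2)"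
    using dll \<open>S1 \<inter> S2 = {r}\<close> by (rule rooted_dll_Un)
  ultimately show ?thesis
    unfolding rooted_cover_def using A1(2) xs1 \<open>1 \<le> m1\<close>
    by (intro conjI disjI2 exI[of _ xs1]) simp_all
qed

lemma rooted_cover_Un_le:
  assumes cov1: "rooted_cover E p S1 r A1 h1 m1" and cov2: "rooted_cover E p S2 r A2 h2 m2"
    and "h2 \<le> h1" "finite S1" "finite S2" "S1 \<inter> S2 = {r}" "symp E"
    and split: "\<And>u v. u \<in> S1 \<union> S2 \<Longrightarrow> v \<in> S1 \<union> S2 \<Longrightarrow> E u v \<Longrightarrow>
      u \<in> S1 \<and> v \<in> S1 \<or> u \<in> S2 \<and> v \<in> S2"
    and paths: "\<And>xs. is_path (S1 \<union> S2) E xs \<Longrightarrow> length xs \<le> p"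
  shows "\<exists>A h m. rooted_cover E p (S1 \<union> S2) r A h m"
proof -
  from cov1 have A1: "vertex_cover S1 E A1" "r \<in> A1"
    and dll1: "A1 = {r} \<and> m1 = 1 \<or> rooted_dll E S1 r m1"
    unfolding rooted_cover_def by blast+
  from cov2 have A2: "vertex_cover S2 E A2" "r \<in> A2"
    and dll2: "A2 = {r} \<and> m2 = 1 \<or> rooted_dll E S2 r m2"
    unfolding rooted_cover_def by blast+
  have cover: "vertex_cover (S1 \<union> S2) E (A1 \<union> A2)"
    using A1(1) A2(1) split by (rule vertex_cover_Un)
  consider "A2 = {r}" | "A1 = {r}" | "rooted_dll E S1 r m1" "rooted_dll E S2 r m2"
    using dll1 dll2 by blast
  then show ?thesis
  proof cases
    case 1
    with cover A1(2) have "vertex_cover (S1 \<union> S2) E A1" by (simp add: insert_absorb)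
    with cov1 show ?thesis by (meson rooted_cover_extend sup_ge1)
  next
    case 2
    with cover A2(2) have "vertex_cover (S1 \<union> S2) E A2" by (simp add: insert_absorb)
    with cov2 show ?thesis by (meson rooted_cover_extend sup_ge2)
  next
    case 3
    with assms show ?thesis by (blast intro: rooted_cover_Un_dll)
  qed
qed

lemma rooted_cover_Un:
  assumes cov1: "rooted_cover E p S1 r A1 h1 m1" and cov2: "rooted_cover E p S2 r A2 h2 m2"
    and "finite S1" "finite S2" "S1 \<inter> S2 = {r}" "symp E"
    and split: "\<And>u v. u \<in> S1 \<union> S2 \<Longrightarrow> v \<in> S1 \<union> S2 \<Longrightarrow> E u v \<Longrightarrow>
      u \<in> S1 \<and> v \<in> S1 \<or> u \<in> S2 \<and> v \<in> S2"
    and paths: "\<And>xs. is_path (S1 \<union> S2) E xs \<Longrightarrow> length xs \<le> p"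
  shows "\<exists>A h m. rooted_cover E p (S1 \<union> S2) r A h m"
proof (cases "h2 \<le> h1")
  case True
  from rooted_cover_Un_le[OF cov1 cov2 True assms(3-6) split paths] show ?thesis .
next
  case False
  have "\<exists>A h m. rooted_cover E p (S2 \<union> S1) r A h m"
    using cov2 cov1 _ \<open>finite S2\<close> \<open>finite S1\<close> _ \<open>symp E\<close>
  proof (rule rooted_cover_Un_le)
    show "h1 \<le> h2" using False by simp
    show "S2 \<inter> S1 = {r}" using \<open>S1 \<inter> S2 = {r}\<close> by blast
  qed (use split paths in \<open>auto simp: Un_commute\<close>)
  then show ?thesis by (simp add: Un_commute)
qed

lemma two_le_card_iff:
  assumes "finite S" "r \<in> S"
  shows "2 \<le> card S \<longleftrightarrow> S \<noteq> {r}"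
proof
  assume "S \<noteq> {r}"
  with assms(2) obtain y where "y \<in> S" "y \<noteq> r" by blast
  with assms have "card {r, y} \<le> card S" by (intro card_mono) auto
  with \<open>y \<noteq> r\<close> show "2 \<le> card S" by simp
qed auto

lemma rooted_cover_exists:
  assumes "symp E" "irreflp E"
  shows "finite S \<Longrightarrow> connected_set E S \<Longrightarrow> r \<in> S \<Longrightarrow> 2 \<le> card S \<Longrightarrow>
    (\<And>xs. is_path S E xs \<Longrightarrow> length xs \<le> p) \<Longrightarrow> \<exists>A h m. rooted_cover E p S r A h m"
proof (induction "card S" arbitrary: S r rule: less_induct)
  case less
  have "S \<noteq> {r}" using two_le_card_iff[OF less.prems(1,3)] less.prems(4) by simp
  with less.prems(3) obtain y where "y \<in> S" "y \<noteq> r" by blast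
  with less.prems(2,3) obtain x where "x \<in> S" "E r x"
    by (rule connected_set_neighbour)
  with \<open>irreflp E\<close> have x: "x \<in> S - {r}" by (auto dest: irreflpD)
  define C where "C = component E (S - {r}) x"
  note C = punctured_component_split[OF less.prems(2) \<open>symp E\<close> less.prems(3) x, folded C_def]
  have "C \<subseteq> S" "r \<notin> C" "r \<in> S - C" using C(2) less.prems(3) by auto
  have "finite C" using \<open>C \<subseteq> S\<close> less.prems(1) by (rule finite_subset)
  have "finite (S - C)" using less.prems(1) by simp
  have "card C < card S"
    using \<open>C \<subseteq> S\<close> \<open>r \<notin> C\<close> less.prems(1,3) by (intro psubset_card_mono) auto
  have "card (S - C) < card S"
    using C(1) \<open>C \<subseteq> S\<close> less.prems(1) by (intro psubset_card_mono) auto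
  have paths: "length xs \<le> p" if "is_path T E xs" "T \<subseteq> S" for T xs
    by (rule less.prems(5)[OF is_path_mono[OF that]])
  have "C = {x} \<or> (\<exists>A h m. rooted_cover E p C x A h m)"
  proof (cases "C = {x}")
    case False
    then have "2 \<le> card C" using two_le_card_iff[OF \<open>finite C\<close> C(1)] by simp
    moreover have "length xs \<le> p" if "is_path C E xs" for xs
      using that \<open>C \<subseteq> S\<close> by (rule paths)
    ultimately show ?thesis
      using less.hyps[OF \<open>card C < card S\<close> \<open>finite C\<close> C(3,1)] by blast
  qed simp
  from rooted_cover_attach[OF this \<open>finite C\<close> \<open>r \<notin> C\<close> C(1) \<open>E r x\<close> assms]
  obtain A1 h1 m1 where cov1: "rooted_cover E p (insert r C) r A1 h1 m1" by blast
  have S: "insert r C \<union> (S - C) = S"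
    using C(2) less.prems(3) by blast
  show ?case
  proof (cases "S - C = {r}")
    case True
    with cov1 S show ?thesis by auto
  next
    case False
    then have "2 \<le> card (S - C)"
      using two_le_card_iff[OF \<open>finite (S - C)\<close> \<open>r \<in> S - C\<close>] by simp
    moreover have "length xs \<le> p" if "is_path (S - C) E xs" for xs
      using that Diff_subset by (rule paths)
    ultimately obtain A2 h2 m2 where cov2: "rooted_cover E p (S - C) r A2 h2 m2"
      using less.hyps[OF \<open>card (S - C) < card S\<close> \<open>finite (S - C)\<close> C(4) \<open>r \<in> S - C\<close>] by blast
    have "insert r C \<inter> (S - C) = {r}"
      using less.prems(3) C(2) by blast
    then have "\<exists>A h m. rooted_cover E p (insert r C \<union> (S - C)) r A h m"
      using \<open>finite C\<close> \<open>finite (S - C)\<close> \<open>symp E\<close>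
    proof (intro rooted_cover_Un[OF cov1 cov2])
      show "u \<in> insert r C \<and> v \<in> insert r C \<or> u \<in> S - C \<and> v \<in> S - C"
        if "u \<in> insert r C \<union> (S - C)" "v \<in> insert r C \<union> (S - C)" "E u v" for u v
        using that unfolding S by (rule C(5))
      show "length xs \<le> p" if "is_path (insert r C \<union> (S - C)) E xs" for xs
        using that unfolding S by (rule less.prems(5))
    qed simp_all
    with S show ?thesis by simp
  qed
qed

lemma rooted_cover_card_bound:
  assumes cov: "rooted_cover E p S r A h m" and paths: "\<And>xs. is_path S E xs \<Longrightarrow> length xs \<le> p"
  shows "2 * card A + 3 * m \<le> Suc m * p + 1"
proof -
  from cov obtain xs where "is_path S E xs" "length xs = Suc h"
    unfolding rooted_cover_def by blast
  with paths have "Suc h \<le> p" by metis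
  moreover have "2 * card A + 3 * m + p \<le> 2 * h + m * p + 3"
    using cov unfolding rooted_cover_def by blast
  ultimately show ?thesis by simp
qed

lemma path_number_ge:
  assumes "graph V E" "is_path V E xs"
  shows "length xs \<le> path_number V E"
proof -
  have "{length xs | xs. is_path V E xs} \<subseteq> {..card V}"
    using assms(1) by (auto simp: graph_def is_path_def walk_in_def intro!: card_mono
        simp flip: distinct_card)
  then have "finite {length xs | xs. is_path V E xs}"
    using finite_subset by blast
  with assms(2) show ?thesis
    unfolding path_number_def by (auto intro: Max_ge)
qed

lemma tau_le_card:
  assumes "graph V E" "vertex_cover V E A"
  shows "tau V E \<le> card A"
proof -
  have "{card A | A. vertex_cover V E A} \<subseteq> {..card V}"
    using assms(1) by (auto simp: graph_def vertex_cover_def intro!: card_mono)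
  then have "finite {card A | A. vertex_cover V E A}"
    using finite_subset by blast
  with assms(2) show ?thesis
    unfolding tau_def by (auto intro: Min_le)
qed

lemma dll_minor_le_card:
  assumes "graph V E" "is_minor (dll_V k) (dll_E k) V E"
  shows "k \<le> card V"
proof -
  from assms(2) obtain \<phi> where \<phi>: "\<forall>x\<in>dll_V k. \<phi> x \<subseteq> V \<and> connected_set E (\<phi> x)"
    "\<forall>x\<in>dll_V k. \<forall>y\<in>dll_V k. x \<noteq> y \<longrightarrow> \<phi> x \<inter> \<phi> y = {}"
    unfolding is_minor_def by blast
  have "finite V" using assms(1) by (simp add: graph_def)
  have U: "U i \<in> dll_V k" if "i \<in> {1..k}" for i
    using that by (simp add: dll_V_def)
  have sub: "\<phi> (U i) \<subseteq> V" and ne: "\<phi> (U i) \<noteq> {}" if "i \<in> {1..k}" for i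
    using \<phi>(1) U[OF that] by (auto simp: connected_set_def)
  have fin: "finite (\<phi> (U i))" if "i \<in> {1..k}" for i
    using sub[OF that] \<open>finite V\<close> by (rule finite_subset)
  have nonempty: "1 \<le> card (\<phi> (U i))" if "i \<in> {1..k}" for i
    using fin[OF that] ne[OF that] by (simp add: Suc_le_eq card_gt_0_iff)
  have "k = (\<Sum>i\<in>{1..k}. 1)" by simp
  also have "\<dots> \<le> (\<Sum>i\<in>{1..k}. card (\<phi> (U i)))"
    using nonempty by (rule sum_mono)
  also have "\<dots> = card (\<Union>i\<in>{1..k}. \<phi> (U i))"
    using \<phi>(2) U fin by (intro card_UN_disjoint[symmetric]) auto
  also have "\<dots> \<le> card V"
    by (rule card_mono[OF \<open>finite V\<close> UN_least[OF sub]])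
  finally show ?thesis .
qed

lemma le_dll_if_minor:
  assumes "graph V E" "is_minor (dll_V k) (dll_E k) V E"
  shows "k \<le> dll V E"
  unfolding dll_def
  using assms dll_minor_le_card by (intro Greatest_le_nat[of _ _ "card V"]) auto

lemma rooted_cover_card_le_dll:
  assumes graph: "graph V E" and cov: "rooted_cover E (path_number V E) V r A h m"
  shows "2 * card A \<le> Suc (dll V E) * path_number V E"
proof -
  have bound: "2 * card A + 3 * m \<le> Suc m * path_number V E + 1"
    using cov path_number_ge[OF graph] by (rule rooted_cover_card_bound)
  have "1 \<le> m" "A = {r} \<and> m = 1 \<or> rooted_dll E V r m"
    using cov by (simp_all add: rooted_cover_def)
  from this(2) show ?thesis
  proof
    assume "A = {r} \<and> m = 1"
    moreover have "path_number V E \<le> Suc (dll V E) * path_number V E" by simp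
    ultimately show ?thesis using bound by simp
  next
    assume "rooted_dll E V r m"
    moreover have "symp E" using graph by (auto simp: graph_def symp_def)
    ultimately have "is_minor (dll_V m) (dll_E m) V E" by (rule rooted_dll_is_minor)
    with graph have "m \<le> dll V E" by (rule le_dll_if_minor)
    then have "Suc m * path_number V E \<le> Suc (dll V E) * path_number V E"
      by (intro mult_le_mono1) simp
    with bound \<open>1 \<le> m\<close> show ?thesis by linarith
  qed
qed

lemma two_tau_le_dll_path_number:
  assumes "connected_graph V E"
  shows "2 * tau V E \<le> Suc (dll V E) * path_number V E"
proof -
  have graph: "graph V E" and "connected_set E V"
    using assms by (simp_all add: connected_graph_def)
  then have "finite V" "symp E" "irreflp E"
    by (auto simp: graph_def symp_def irreflp_def)
  obtain r where "r \<in> V" using \<open>connected_set E V\<close> by (auto simp: connected_set_def)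
  show ?thesis
  proof (cases "V = {r}")
    case True
    with \<open>irreflp E\<close> have "vertex_cover V E {}" by (auto simp: vertex_cover_def dest: irreflpD)
    with graph show ?thesis using tau_le_card by fastforce
  next
    case False
    with \<open>finite V\<close> \<open>r \<in> V\<close> have "2 \<le> card V" by (simp add: two_le_card_iff)
    with rooted_cover_exists[OF \<open>symp E\<close> \<open>irreflp E\<close> \<open>finite V\<close> \<open>connected_set E V\<close> \<open>r \<in> V\<close>]
    obtain A h m where cov: "rooted_cover E (path_number V E) V r A h m"
      using path_number_ge[OF graph] by blast
    then have "tau V E \<le> card A"
      using graph by (auto simp: rooted_cover_def intro: tau_le_card)
    moreover have "2 * card A \<le> Suc (dll V E) * path_number V E"
      using graph cov by (rule rooted_cover_card_le_dll)
    ultimately show ?thesis by linarith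
  qed
qed

theorem mainTheorem17:
  fixes V :: "'a set" and E :: "'a \<Rightarrow> 'a \<Rightarrow> bool"
  assumes "connected_graph V E"
  shows "int (tau V E) \<le> \<lceil>(real (dll V E) + 1) * real (path_number V E) / 2\<rceil>"
proof -
  have "real (2 * tau V E) \<le> real (Suc (dll V E) * path_number V E)"
    using two_tau_le_dll_path_number[OF assms] by (simp only: of_nat_le_iff)
  then have "2 * real (tau V E) \<le> (real (dll V E) + 1) * real (path_number V E)"
    by (simp add: algebra_simps)
  then have "real (tau V E) \<le> (real (dll V E) + 1) * real (path_number V E) / 2"
    by linarith
  then have "\<lceil>real (tau V E)\<rceil> \<le> \<lceil>(real (dll V E) + 1) * real (path_number V E) / 2\<rceil>"
    by (rule ceiling_mono)
  then show ?thesis by simp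
qed

end
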